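(* There is a constant $C>0$ depending only on $\lambda$ such that $$|S_n(x)-T_n(x)|\le C\,a_n\qquad\text{for all } n=0,1,2,\dots\text{ and all }x\in K.$$
   Context: Fix $(\lambda_n)_{n\ge1}$ and $\lambda$ with $\frac14\le\lambda_n\le\lambda<\frac12$. Starting from $Q_0=[0,1]^2\subset\mathbb{C}$, inductively replace each square of generation $n-1$ by its $4$ axis-parallel corner subsquares of side ratio $\lambda_n$; generation $n$ consists of $4^n$ closed squares of side $s_n=\lambda_1\cdots\lambda_n$ ($s_0=1$), forming the family $\mathcal D_n$. $K=\bigcap_n\bigcup_{Q\in\mathcal D_n}Q$, $\mu$ is the Borel probability measure on $K$ giving mass $4^{-n}$ to each $Q\in\mathcal D_n$, and $a_n=1/(4^ns_n)$. Let $C(z)=1/z$. For $x\in K$ let $Q_n(x)$ be the square of $\mathcal D_n$ containing $x$, $T_n(x)=\int_{K\setminus Q_n(x)}C(x-y)\,d\mu(y)$, and $S_n(x)=\frac{1}{\mu(Q_n(x))}\int_{Q_n(x)}T_n\,d\mu$. *)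

theory Defs
  imports "HOL-Probability.Probability"
begin

text \<open>Ratios lam k are indexed from k = 1; lam 0 is irrelevant.\<close>

definition side :: "(nat \<Rightarrow> real) \<Rightarrow> nat \<Rightarrow> real" where
  "side lam n = (\<Prod>k\<in>{1..n}. lam k)"

text \<open>Lower-left corners of the generation-n squares: each square of generation n
  with corner c and side s_n is replaced by the 4 corner subsquares of side s_(n+1),
  whose lower-left corners are c + (s_n - s_(n+1)) d, d in {0,1,i,1+i}.\<close>

primrec corners :: "(nat \<Rightarrow> real) \<Rightarrow> nat \<Rightarrow> complex set" where
  "corners lam 0 = {0}"
| "corners lam (Suc n) =
     {c + complex_of_real ((1 - lam (Suc n)) * side lam n) * d | c d.
        c \<in> corners lam n \<and> d \<in> {0, 1, \<i>, 1 + \<i>}}"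

definition square :: "complex \<Rightarrow> real \<Rightarrow> complex set" where
  "square c r = cbox c (c + complex_of_real r * (1 + \<i>))"

definition gen :: "(nat \<Rightarrow> real) \<Rightarrow> nat \<Rightarrow> complex set set" where
  "gen lam n = (\<lambda>c. square c (side lam n)) ` corners lam n"

definition cantorK :: "(nat \<Rightarrow> real) \<Rightarrow> complex set" where
  "cantorK lam = (\<Inter>n. \<Union>(gen lam n))"

definition a_seq :: "(nat \<Rightarrow> real) \<Rightarrow> nat \<Rightarrow> real" where
  "a_seq lam n = 1 / (4 ^ n * side lam n)"

definition Qsq :: "(nat \<Rightarrow> real) \<Rightarrow> nat \<Rightarrow> complex \<Rightarrow> complex set" where
  "Qsq lam n x = (THE Q. Q \<in> gen lam n \<and> x \<in> Q)"

definition Tn :: "(nat \<Rightarrow> real) \<Rightarrow> complex measure \<Rightarrow> nat \<Rightarrow> complex \<Rightarrow> complex" where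
  "Tn lam \<mu> n x = set_lebesgue_integral \<mu> (cantorK lam - Qsq lam n x) (\<lambda>y. 1 / (x - y))"

definition Sn :: "(nat \<Rightarrow> real) \<Rightarrow> complex measure \<Rightarrow> nat \<Rightarrow> complex \<Rightarrow> complex" where
  "Sn lam \<mu> n x = (1 / measure \<mu> (Qsq lam n x)) *\<^sub>R
      set_lebesgue_integral \<mu> (Qsq lam n x) (Tn lam \<mu> n)"

end

theory Submission
  imports Defs
begin

text \<open>Two points of K lying in different squares of generation j+1 but in the same square of
  generation j are at distance at least (1 - 2\<lambda>) s_j, since sibling squares are separated by the
  gaps the construction leaves. Hence, for z, z' in Q_n(x), every y \<in> K - Q_n(x) has a level j < n
  with y \<in> Q_j(x) and |z - y|, |z' - y| \<ge> (1 - 2\<lambda>) s_j, so that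
  |1/(z - y) - 1/(z' - y)| \<le> |z - z'| / ((1 - 2\<lambda>) s_j)^2. Integrating against \<mu>, whose mass
  on Q_j(x) is 4^-j, shows that T_n is Lipschitz on Q_n(x) with constant
  L_n = \<Sum>_{j<n} 4^-j / ((1 - 2\<lambda>) s_j)^2. Since S_n(x) is the mean of T_n over Q_n(x), it
  differs from T_n(x) by at most diam Q_n(x) \<cdot> L_n \<le> 2 s_n L_n, and s_n \<le> \<lambda>^(n-j) s_j turns
  4^n s_n^2 L_n into a geometric series of ratio 4\<lambda>^2 < 1.\<close>

lemma (in finite_measure) set_integrable_bounded:
  fixes f :: "'a \<Rightarrow> 'b::{banach, second_countable_topology}"
  assumes "set_borel_measurable M A f" "\<And>x. x \<in> A \<Longrightarrow> norm (f x) \<le> B"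
  shows "set_integrable M A f"
  unfolding set_integrable_def
proof (rule integrable_const_bound[where B = "max 0 B"])
  show "AE x in M. norm (indicator A x *\<^sub>R f x) \<le> max 0 B"
    using assms(2) by (intro AE_I2) (auto split: split_indicator simp: le_max_iff_disj)
qed (use assms(1) in \<open>simp add: set_borel_measurable_def\<close>)

lemma (in finite_measure) norm_set_average_diff_le:
  fixes F :: "'a \<Rightarrow> 'b::{banach, second_countable_topology}"
  assumes Q: "Q \<in> sets M" "measure M Q > 0" and F: "set_integrable M Q F"
    and bound: "\<And>z. z \<in> Q \<Longrightarrow> norm (F z - c) \<le> B"
  shows "norm ((1 / measure M Q) *\<^sub>R set_lebesgue_integral M Q F - c) \<le> B"
proof -
  have const: "set_integrable M Q (\<lambda>_. c)"
    using Q by (intro set_integrable_bounded[where B = "norm c"])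
      (auto simp: set_borel_measurable_def)
  have B: "set_integrable M Q (\<lambda>_. B)"
    using Q by (intro set_integrable_bounded[where B = "\<bar>B\<bar>"])
      (auto simp: set_borel_measurable_def)
  have "norm (set_lebesgue_integral M Q F - measure M Q *\<^sub>R c) = norm (LINT z:Q|M. F z - c)"
    using F const Q by (simp add: set_integral_const)
  also have "\<dots> \<le> (LINT z:Q|M. norm (F z - c))"
    using F const by (intro set_integral_norm_bound) simp
  also have "\<dots> \<le> (LINT z:Q|M. B)"
    using F const B bound by (intro set_integral_mono set_integrable_norm) auto
  also have "\<dots> = measure M Q * B"
    using Q by (simp add: set_integral_const)
  finally have "norm (set_lebesgue_integral M Q F - measure M Q *\<^sub>R c) \<le> measure M Q * B" .
  moreover have "(1 / measure M Q) *\<^sub>R set_lebesgue_integral M Q F - c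
      = (1 / measure M Q) *\<^sub>R (set_lebesgue_integral M Q F - measure M Q *\<^sub>R c)"
    using Q by (simp add: scaleR_diff_right)
  ultimately show ?thesis
    using Q by (simp add: divide_le_eq mult.commute)
qed

lemma sum_power_diff_le:
  fixes r :: real
  assumes "0 \<le> r" "r < 1"
  shows "(\<Sum>j<n. r ^ (n - j)) \<le> 1 / (1 - r)"
proof -
  have "(\<Sum>j<n. r ^ (n - j)) = r * (\<Sum>j<n. r ^ (n - Suc j))"
    by (simp add: sum_distrib_left Suc_diff_Suc flip: power_Suc)
  also have "(\<Sum>j<n. r ^ (n - Suc j)) = (1 - r ^ n) / (1 - r)"
    using assms by (simp add: sum.nat_diff_reindex sum_gp_strict)
  also have "r * ((1 - r ^ n) / (1 - r)) \<le> 1 / (1 - r)"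
  proof -
    have "r * (1 - r ^ n) \<le> 1"
      using assms by (intro mult_le_one) (auto simp: power_le_one)
    then show ?thesis
      using assms by (simp add: divide_right_mono)
  qed
  finally show ?thesis .
qed

lemma side_0 [simp]: "side lam 0 = 1"
  unfolding side_def by simp

lemma side_Suc: "side lam (Suc n) = side lam n * lam (Suc n)"
  unfolding side_def by (simp add: prod.nat_ivl_Suc' mult.commute)

lemma side_pos:
  assumes "\<forall>k\<ge>1. 0 < lam k"
  shows "side lam n > 0"
  unfolding side_def using assms by (intro prod_pos) auto

lemma side_le_power:
  assumes "\<forall>k\<ge>1. 0 < lam k \<and> lam k \<le> l" "j \<le> n"
  shows "side lam n \<le> l ^ (n - j) * side lam j"
  using assms(2)
proof (induction n)
  case (Suc n)
  show ?case
  proof (cases "j = Suc n")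
    case False
    then have "j \<le> n" using Suc.prems by simp
    have "0 < lam (Suc n)" "lam (Suc n) \<le> l" "0 < side lam n"
      using assms(1) side_pos[of lam n] by auto
    have "side lam (Suc n) = side lam n * lam (Suc n)" by (rule side_Suc)
    also have "\<dots> \<le> (l ^ (n - j) * side lam j) * l"
      using Suc.IH[OF \<open>j \<le> n\<close>] \<open>0 < lam (Suc n)\<close> \<open>lam (Suc n) \<le> l\<close> \<open>0 < side lam n\<close>
      by (intro mult_mono) auto
    also have "\<dots> = l ^ (Suc n - j) * side lam j"
      using \<open>j \<le> n\<close> by (simp add: Suc_diff_le field_simps)
    finally show ?thesis .
  qed simp
qed simp

lemma finite_corners: "finite (corners lam n)"
proof (induction n)
  case (Suc n)
  have "corners lam (Suc n) = (\<lambda>(c, d). c + complex_of_real ((1 - lam (Suc n)) * side lam n) * d)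
      ` (corners lam n \<times> {0, 1, \<i>, 1 + \<i>})"
    by auto
  then show ?case using Suc by simp
qed simp

lemma mem_corners_Suc:
  "c \<in> corners lam (Suc n) \<longleftrightarrow> (\<exists>a d. c = a + complex_of_real ((1 - lam (Suc n)) * side lam n) * d
      \<and> a \<in> corners lam n \<and> d \<in> {0, 1, \<i>, 1 + \<i>})"
  by (simp only: corners.simps mem_Collect_eq)

lemma finite_gen: "finite (gen lam n)"
  unfolding gen_def using finite_corners by simp

lemma gen_0: "gen lam 0 = {square 0 1}"
  unfolding gen_def by simp

lemma mem_square_iff:
  "z \<in> square c r \<longleftrightarrow> Re c \<le> Re z \<and> Re z \<le> Re c + r \<and> Im c \<le> Im z \<and> Im z \<le> Im c + r"
  unfolding square_def in_cbox_complex_iff by auto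

lemma closed_gen: "Q \<in> gen lam n \<Longrightarrow> closed Q"
  unfolding gen_def square_def by auto

lemma closed_cantorK: "closed (cantorK lam)"
  unfolding cantorK_def
  by (intro closed_INT ballI closed_Union finite_gen) (auto intro: closed_gen)

lemma cantorK_subset_unit_square: "cantorK lam \<subseteq> square 0 1"
  unfolding cantorK_def using gen_0 by blast

lemma diameter_gen_le:
  assumes "Q \<in> gen lam n" "z \<in> Q" "z' \<in> Q"
  shows "cmod (z - z') \<le> 2 * side lam n"
proof -
  obtain c where c: "Q = square c (side lam n)" using assms(1) unfolding gen_def by auto
  have "\<bar>Re (z - z')\<bar> \<le> side lam n" "\<bar>Im (z - z')\<bar> \<le> side lam n"
    using assms(2,3) unfolding c mem_square_iff by auto
  then show ?thesis using cmod_le[of "z - z'"] by linarith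
qed

lemma corner_direction_cases:
  "d \<in> {0, 1, \<i>, 1 + \<i>} \<Longrightarrow> (Re d = 0 \<or> Re d = 1) \<and> (Im d = 0 \<or> Im d = 1)"
  by auto

lemma corner_square_subset:
  assumes "0 \<le> l" "l \<le> 1" "0 \<le> s" "d \<in> {0, 1, \<i>, 1 + \<i>}"
  shows "square (c + complex_of_real ((1 - l) * s) * d) (l * s) \<subseteq> square c s"
proof -
  have "0 \<le> (1 - l) * s" "0 \<le> l * s" using assms by simp_all
  then show ?thesis
    using corner_direction_cases[OF assms(4)]
    by (auto simp: subset_iff mem_square_iff algebra_simps)
qed

definition sup_separated :: "complex set \<Rightarrow> complex set \<Rightarrow> real \<Rightarrow> bool" where
  "sup_separated A B g \<longleftrightarrow> (\<forall>p\<in>A. \<forall>q\<in>B. g \<le> \<bar>Re p - Re q\<bar> \<or> g \<le> \<bar>Im p - Im q\<bar>)"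

lemma sup_separated_mono:
  "sup_separated A B g \<Longrightarrow> A' \<subseteq> A \<Longrightarrow> B' \<subseteq> B \<Longrightarrow> g' \<le> g \<Longrightarrow> sup_separated A' B' g'"
  unfolding sup_separated_def by (meson order_trans subsetD)

lemma sup_separated_le_dist:
  "sup_separated A B g \<Longrightarrow> p \<in> A \<Longrightarrow> q \<in> B \<Longrightarrow> g \<le> cmod (p - q)"
  unfolding sup_separated_def using abs_Re_le_cmod[of "p - q"] abs_Im_le_cmod[of "p - q"] by force

lemma sibling_squares_separated:
  assumes "d1 \<in> {0, 1, \<i>, 1 + \<i>}" "d2 \<in> {0, 1, \<i>, 1 + \<i>}" "d1 \<noteq> d2"
  shows "sup_separated (square (a + complex_of_real t * d1) r) (square (a + complex_of_real t * d2) r) (t - r)"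
  unfolding sup_separated_def
proof (intro ballI)
  fix p q
  assume "p \<in> square (a + complex_of_real t * d1) r" "q \<in> square (a + complex_of_real t * d2) r"
  moreover have "Re d1 \<noteq> Re d2 \<or> Im d1 \<noteq> Im d2" using assms(3) complex_eqI by blast
  ultimately show "t - r \<le> \<bar>Re p - Re q\<bar> \<or> t - r \<le> \<bar>Im p - Im q\<bar>"
    using corner_direction_cases[OF assms(1)] corner_direction_cases[OF assms(2)]
    by (auto simp: mem_square_iff abs_if)
qed

lemma four_sq_less_1:
  fixes l :: real
  assumes "0 \<le> l" "l < 1/2"
  shows "4 * l^2 < 1"
proof -
  have "l^2 < (1/2)^2" using assms by (intro power_strict_mono) auto
  then show ?thesis by (simp add: power2_eq_square)
qed

definition approx_const :: "real \<Rightarrow> real" where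
  "approx_const lambda = 2 / ((1 - 2 * lambda)^2 * (1 - 4 * lambda^2))"

lemma approx_const_pos: "0 \<le> lambda \<Longrightarrow> lambda < 1/2 \<Longrightarrow> approx_const lambda > 0"
  unfolding approx_const_def using four_sq_less_1 by simp

locale cantor_ratios =
  fixes lam :: "nat \<Rightarrow> real" and lambda :: real
  assumes ratio_bounds: "\<forall>k\<ge>1. 1/4 \<le> lam k \<and> lam k \<le> lambda"
    and lambda_less_half: "lambda < 1/2"
begin

abbreviation gap :: real where "gap \<equiv> 1 - 2 * lambda"

lemma lam_bounds: "k \<ge> 1 \<Longrightarrow> 1/4 \<le> lam k \<and> lam k \<le> lambda"
  using ratio_bounds by auto

lemma gap_pos: "gap > 0"
  using lambda_less_half by simp

lemma side_gt_0: "side lam n > 0"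
  using ratio_bounds by (intro side_pos) force

lemma side_le_power_lambda: "j \<le> n \<Longrightarrow> side lam n \<le> lambda ^ (n - j) * side lam j"
  using ratio_bounds by (intro side_le_power) force+

lemma side_antimono: "j \<le> n \<Longrightarrow> side lam n \<le> side lam j"
proof -
  assume "j \<le> n"
  have "side lam n \<le> lambda ^ (n - j) * side lam j" by (rule side_le_power_lambda) fact
  also have "\<dots> \<le> 1 * side lam j"
    using lam_bounds[of 1] lambda_less_half side_gt_0[of j]
    by (intro mult_right_mono power_le_one) auto
  finally show ?thesis by simp
qed

lemma child_square_subset:
  assumes "d \<in> {0, 1, \<i>, 1 + \<i>}"
  shows "square (a + complex_of_real ((1 - lam (Suc n)) * side lam n) * d) (side lam (Suc n))
    \<subseteq> square a (side lam n)"
  unfolding side_Suc mult.commute[of "side lam n"]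
  using lam_bounds[of "Suc n"] lambda_less_half side_gt_0[of n] assms
  by (intro corner_square_subset) auto

lemma child_squares_separated:
  assumes "a1 \<in> corners lam n" "a2 \<in> corners lam n"
    "d1 \<in> {0, 1, \<i>, 1 + \<i>}" "d2 \<in> {0, 1, \<i>, 1 + \<i>}"
    "c1 = a1 + complex_of_real ((1 - lam (Suc n)) * side lam n) * d1"
    "c2 = a2 + complex_of_real ((1 - lam (Suc n)) * side lam n) * d2"
    "c1 \<noteq> c2"
    and parents: "a1 \<noteq> a2 \<Longrightarrow> sup_separated (square a1 (side lam n)) (square a2 (side lam n)) (gap * side lam n)"
  shows "sup_separated (square c1 (side lam (Suc n))) (square c2 (side lam (Suc n))) (gap * side lam n)"
proof (cases "a1 = a2")
  case True
  define l where "l = lam (Suc n)"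
  have "d1 \<noteq> d2" using assms(5-7) True by auto
  from sibling_squares_separated[OF assms(3,4) this, of a1 "(1 - l) * side lam n" "l * side lam n"]
  have "sup_separated (square c1 (l * side lam n)) (square c2 (l * side lam n))
      ((1 - l) * side lam n - l * side lam n)"
    unfolding assms(5,6) True l_def .
  moreover have "gap * side lam n \<le> (1 - l) * side lam n - l * side lam n"
    using lam_bounds[of "Suc n"] side_gt_0[of n] by (simp add: l_def algebra_simps mult_right_mono)
  ultimately show ?thesis
    unfolding side_Suc l_def mult.commute[of "side lam n"]
    by (rule sup_separated_mono[OF _ order_refl order_refl])
next
  case False
  have "square c1 (side lam (Suc n)) \<subseteq> square a1 (side lam n)"
    unfolding assms(5) by (rule child_square_subset[OF assms(3)])
  moreover have "square c2 (side lam (Suc n)) \<subseteq> square a2 (side lam n)"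
    unfolding assms(6) by (rule child_square_subset[OF assms(4)])
  ultimately show ?thesis by (rule sup_separated_mono[OF parents[OF False] _ _ order_refl])
qed

lemma distinct_corners_separated:
  "c1 \<in> corners lam (Suc m) \<Longrightarrow> c2 \<in> corners lam (Suc m) \<Longrightarrow> c1 \<noteq> c2 \<Longrightarrow>
   sup_separated (square c1 (side lam (Suc m))) (square c2 (side lam (Suc m))) (gap * side lam m)"
proof (induction m arbitrary: c1 c2)
  case 0
  then obtain a1 d1 a2 d2 where
    "c1 = a1 + complex_of_real ((1 - lam (Suc 0)) * side lam 0) * d1" "a1 \<in> corners lam 0" "d1 \<in> {0, 1, \<i>, 1 + \<i>}"
    "c2 = a2 + complex_of_real ((1 - lam (Suc 0)) * side lam 0) * d2" "a2 \<in> corners lam 0" "d2 \<in> {0, 1, \<i>, 1 + \<i>}"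
    unfolding mem_corners_Suc by blast
  moreover from this have "a1 = a2" by simp
  ultimately show ?case
    using child_squares_separated[of a1 0 a2 d1 d2 c1 c2] 0(3) by simp
next
  case (Suc m)
  then obtain a1 d1 a2 d2 where a:
    "c1 = a1 + complex_of_real ((1 - lam (Suc (Suc m))) * side lam (Suc m)) * d1" "a1 \<in> corners lam (Suc m)" "d1 \<in> {0, 1, \<i>, 1 + \<i>}"
    "c2 = a2 + complex_of_real ((1 - lam (Suc (Suc m))) * side lam (Suc m)) * d2" "a2 \<in> corners lam (Suc m)" "d2 \<in> {0, 1, \<i>, 1 + \<i>}"
    unfolding mem_corners_Suc by blast
  have "gap * side lam (Suc m) \<le> gap * side lam m"
    using side_antimono[of m "Suc m"] gap_pos by (intro mult_left_mono) auto
  then have "a1 \<noteq> a2 \<Longrightarrow> sup_separated (square a1 (side lam (Suc m))) (square a2 (side lam (Suc m)))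
      (gap * side lam (Suc m))"
    using sup_separated_mono[OF Suc.IH[OF a(2,5)] order_refl order_refl] by simp
  then show ?case by (rule child_squares_separated[OF a(2,5,3,6,1,4) Suc.prems(3)])
qed

lemma gen_squares_separated:
  assumes "Q1 \<in> gen lam (Suc m)" "Q2 \<in> gen lam (Suc m)" "Q1 \<noteq> Q2"
  shows "sup_separated Q1 Q2 (gap * side lam m)"
proof -
  obtain c1 c2 where c: "c1 \<in> corners lam (Suc m)" "Q1 = square c1 (side lam (Suc m))"
    "c2 \<in> corners lam (Suc m)" "Q2 = square c2 (side lam (Suc m))"
    using assms(1,2) unfolding gen_def by blast
  with assms(3) have "c1 \<noteq> c2" by blast
  with c show ?thesis using distinct_corners_separated by simp
qed

lemma gen_eq_if_common_point:
  assumes "Q1 \<in> gen lam n" "Q2 \<in> gen lam n" "x \<in> Q1" "x \<in> Q2"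
  shows "Q1 = Q2"
proof (cases n)
  case 0
  then show ?thesis using assms(1,2) gen_0 by simp
next
  case (Suc m)
  show ?thesis
  proof (rule ccontr)
    assume "Q1 \<noteq> Q2"
    with assms(1,2) Suc have "sup_separated Q1 Q2 (gap * side lam m)"
      by (simp add: gen_squares_separated)
    from sup_separated_le_dist[OF this assms(3,4)] have "gap * side lam m \<le> 0" by simp
    moreover have "0 < gap * side lam m" using gap_pos side_gt_0[of m] by simp
    ultimately show False by linarith
  qed
qed

lemma Qsq_eq:
  assumes "Q \<in> gen lam n" "x \<in> Q"
  shows "Qsq lam n x = Q"
  unfolding Qsq_def
proof (rule the_equality)
  show "Q \<in> gen lam n \<and> x \<in> Q" using assms by simp
qed (use assms gen_eq_if_common_point in blast)

lemma
  assumes "x \<in> cantorK lam"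
  shows Qsq_in_gen: "Qsq lam n x \<in> gen lam n" and mem_Qsq: "x \<in> Qsq lam n x"
proof -
  obtain Q where "Q \<in> gen lam n" "x \<in> Q" using assms unfolding cantorK_def by blast
  then show "Qsq lam n x \<in> gen lam n" "x \<in> Qsq lam n x" using Qsq_eq by simp_all
qed

lemma Qsq_0: "x \<in> cantorK lam \<Longrightarrow> Qsq lam 0 x = square 0 1"
  using Qsq_in_gen[of x 0] by (simp add: gen_0)

lemma gen_Suc_refines:
  assumes "Q \<in> gen lam (Suc n)"
  shows "\<exists>P\<in>gen lam n. Q \<subseteq> P"
proof -
  obtain c where c: "c \<in> corners lam (Suc n)" "Q = square c (side lam (Suc n))"
    using assms unfolding gen_def by blast
  from c(1) obtain a d where a: "c = a + complex_of_real ((1 - lam (Suc n)) * side lam n) * d"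
    "a \<in> corners lam n" "d \<in> {0, 1, \<i>, 1 + \<i>}"
    unfolding mem_corners_Suc by blast
  have "Q \<subseteq> square a (side lam n)"
    unfolding c(2) a(1) by (rule child_square_subset[OF a(3)])
  moreover have "square a (side lam n) \<in> gen lam n"
    using a(2) unfolding gen_def by blast
  ultimately show ?thesis by blast
qed

lemma gen_refines: "m \<le> n \<Longrightarrow> Q \<in> gen lam n \<Longrightarrow> \<exists>P\<in>gen lam m. Q \<subseteq> P"
proof (induction n arbitrary: Q rule: dec_induct)
  case (step n)
  obtain P where "P \<in> gen lam n" "Q \<subseteq> P" using gen_Suc_refines[OF step.prems] by blast
  with step.IH[of P] show ?case by blast
qed blast

lemma Qsq_antimono:
  assumes "x \<in> cantorK lam" "m \<le> n"
  shows "Qsq lam n x \<subseteq> Qsq lam m x"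
proof -
  obtain P where P: "P \<in> gen lam m" "Qsq lam n x \<subseteq> P"
    using gen_refines[OF assms(2) Qsq_in_gen[OF assms(1)]] by blast
  with mem_Qsq[OF assms(1)] have "Qsq lam m x = P" by (intro Qsq_eq) auto
  with P show ?thesis by simp
qed

lemma separation_from_Qsq:
  assumes x: "x \<in> cantorK lam" and y: "y \<in> cantorK lam" "y \<notin> Qsq lam n x"
  obtains j where "j < n" "y \<in> Qsq lam j x"
    "\<And>z. z \<in> Qsq lam n x \<Longrightarrow> gap * side lam j \<le> cmod (z - y)"
proof -
  have "y \<in> Qsq lam 0 x" using y(1) cantorK_subset_unit_square Qsq_0[OF x] by blast
  then obtain j where j: "j < n" "\<forall>i\<le>j. y \<in> Qsq lam i x" "y \<notin> Qsq lam (Suc j) x"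
    using ex_least_nat_less[of "\<lambda>m. y \<notin> Qsq lam m x" n] y(2) by blast
  have "Qsq lam (Suc j) x \<noteq> Qsq lam (Suc j) y" using j(3) mem_Qsq[OF y(1)] by metis
  then have sep: "sup_separated (Qsq lam (Suc j) x) (Qsq lam (Suc j) y) (gap * side lam j)"
    using Qsq_in_gen[OF x] Qsq_in_gen[OF y(1)] by (intro gen_squares_separated)
  have "gap * side lam j \<le> cmod (z - y)" if "z \<in> Qsq lam n x" for z
  proof (rule sup_separated_le_dist[OF sep _ mem_Qsq[OF y(1)]])
    show "z \<in> Qsq lam (Suc j) x" using Qsq_antimono[OF x, of "Suc j" n] j(1) that by auto
  qed
  with j show ?thesis using that by blast
qed

lemma norm_inverse_diff_le:
  assumes x: "x \<in> cantorK lam" and z: "z \<in> Qsq lam n x" "z' \<in> Qsq lam n x"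
    and y: "y \<in> cantorK lam - Qsq lam n x"
  shows "cmod (1 / (z - y) - 1 / (z' - y))
    \<le> cmod (z - z') * (\<Sum>j<n. indicator (Qsq lam j x) y / (gap * side lam j)^2)"
proof -
  obtain j where j: "j < n" "y \<in> Qsq lam j x"
    "gap * side lam j \<le> cmod (z - y)" "gap * side lam j \<le> cmod (z' - y)"
    using separation_from_Qsq[OF x] y z by (metis Diff_iff)
  define d where "d = gap * side lam j"
  have "d > 0" using gap_pos side_gt_0 by (simp add: d_def)
  with j(3,4) have d: "d \<le> cmod (z - y)" "d \<le> cmod (z' - y)" "z \<noteq> y" "z' \<noteq> y"
    by (auto simp: d_def)
  then have "1 / (z - y) - 1 / (z' - y) = (z' - z) / ((z - y) * (z' - y))"
    by (simp add: field_simps)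
  then have "cmod (1 / (z - y) - 1 / (z' - y)) = cmod (z - z') / (cmod (z - y) * cmod (z' - y))"
    by (simp add: norm_divide norm_mult norm_minus_commute)
  also have "\<dots> \<le> cmod (z - z') / (d * d)"
    using d \<open>d > 0\<close> by (intro divide_left_mono mult_mono mult_pos_pos) auto
  also have "\<dots> = cmod (z - z') * (indicator (Qsq lam j x) y / d^2)"
    using j(2) by (simp add: power2_eq_square)
  also have "\<dots> \<le> cmod (z - z') * (\<Sum>j<n. indicator (Qsq lam j x) y / (gap * side lam j)^2)"
    using member_le_sum[of j "{..<n}" "\<lambda>i. indicator (Qsq lam i x) y / (gap * side lam i)^2"] j(1)
    by (intro mult_left_mono) (auto simp: d_def)
  finally show ?thesis .
qed

definition kernel_lip :: "nat \<Rightarrow> real" where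
  "kernel_lip n = (\<Sum>j<n. (1/4)^j / (gap * side lam j)^2)"

lemma kernel_lip_nonneg: "0 \<le> kernel_lip n"
  unfolding kernel_lip_def by (intro sum_nonneg) auto

lemma scaled_kernel_lip_term_le:
  assumes "j < n"
  shows "4^n * (side lam n)^2 * ((1/4)^j / (gap * side lam j)^2) \<le> (4 * lambda^2)^(n - j) / gap^2"
proof -
  define k where "k = n - j"
  have n: "n = j + k" using assms unfolding k_def by simp
  have "(side lam n)^2 \<le> (lambda^k * side lam j)^2"
    using side_le_power_lambda[of j n] side_gt_0[of n] assms unfolding k_def
    by (intro power_mono) auto
  have "4^n * (side lam n)^2 * ((1/4)^j / (gap * side lam j)^2)
      = 4^k * (side lam n)^2 / (gap^2 * (side lam j)^2)"
    unfolding n power_add power_mult_distrib by (simp add: power_one_over)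
  also have "\<dots> \<le> 4^k * (lambda^k * side lam j)^2 / (gap^2 * (side lam j)^2)"
    using \<open>(side lam n)^2 \<le> (lambda^k * side lam j)^2\<close> gap_pos side_gt_0[of j]
    by (intro divide_right_mono mult_left_mono) auto
  also have "\<dots> = (4 * lambda^2)^k / gap^2"
    using side_gt_0[of j] by (simp add: field_simps power_mult_distrib flip: power_mult)
  finally show ?thesis unfolding k_def .
qed

lemma scaled_kernel_lip_le: "4^n * (side lam n)^2 * kernel_lip n \<le> 1 / ((1 - 4 * lambda^2) * gap^2)"
proof -
  have "4^n * (side lam n)^2 * kernel_lip n
      = (\<Sum>j<n. 4^n * (side lam n)^2 * ((1/4)^j / (gap * side lam j)^2))"
    unfolding kernel_lip_def by (simp add: sum_distrib_left)
  also have "\<dots> \<le> (\<Sum>j<n. (4 * lambda^2)^(n - j)) / gap^2"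
    unfolding sum_divide_distrib by (intro sum_mono scaled_kernel_lip_term_le) simp
  also have "\<dots> \<le> (1 / (1 - 4 * lambda^2)) / gap^2"
    using four_sq_less_1[of lambda] lam_bounds[of 1] lambda_less_half
    by (intro divide_right_mono sum_power_diff_le) auto
  finally show ?thesis by simp
qed

lemma diameter_kernel_lip_le: "2 * side lam n * kernel_lip n \<le> approx_const lambda * a_seq lam n"
proof -
  have s: "side lam n > 0" by (rule side_gt_0)
  have "2 * side lam n * kernel_lip n = (2 / (4^n * side lam n)) * (4^n * (side lam n)^2 * kernel_lip n)"
    using s by (simp add: field_simps power2_eq_square)
  also have "\<dots> \<le> (2 / (4^n * side lam n)) * (1 / ((1 - 4 * lambda^2) * gap^2))"
    using scaled_kernel_lip_le s by (intro mult_left_mono) auto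
  also have "\<dots> = approx_const lambda * a_seq lam n"
    unfolding approx_const_def a_seq_def by (simp add: field_simps)
  finally show ?thesis .
qed

end

locale cantor_measure = cantor_ratios +
  fixes \<mu> :: "complex measure"
  assumes sets_\<mu>: "sets \<mu> = sets borel" and finite_\<mu>: "finite_measure \<mu>"
    and measure_gen: "\<And>n Q. Q \<in> gen lam n \<Longrightarrow> measure \<mu> Q = 1 / 4^n"
begin

interpretation finite_measure \<mu> by (rule finite_\<mu>)

lemma gen_in_sets: "Q \<in> gen lam n \<Longrightarrow> Q \<in> sets \<mu>"
  using closed_gen sets_\<mu> by simp

lemma cantorK_diff_gen_in_sets: "Q \<in> gen lam n \<Longrightarrow> cantorK lam - Q \<in> sets \<mu>"
  using closed_gen closed_cantorK sets_\<mu> by auto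

lemma set_borel_measurable_continuous_on:
  fixes f :: "complex \<Rightarrow> 'b::real_normed_vector"
  assumes "A \<in> sets \<mu>" "continuous_on A f"
  shows "set_borel_measurable \<mu> A f"
  unfolding set_borel_measurable_def measurable_cong_sets[OF sets_\<mu> refl]
  using assms(1) sets_\<mu> by (intro borel_measurable_continuous_on_indicator[OF _ assms(2)]) simp

lemma Tn_eq: "Q \<in> gen lam n \<Longrightarrow> z \<in> Q \<Longrightarrow> Tn lam \<mu> n z = (LINT y:cantorK lam - Q|\<mu>. 1 / (z - y))"
  unfolding Tn_def using Qsq_eq by simp

lemma kernel_set_integrable:
  assumes x: "x \<in> cantorK lam" and z: "z \<in> Qsq lam n x"
  shows "set_integrable \<mu> (cantorK lam - Qsq lam n x) (\<lambda>y. 1 / (z - y))"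
proof (rule set_integrable_bounded)
  let ?A = "cantorK lam - Qsq lam n x"
  have "continuous_on ?A (\<lambda>y. 1 / (z - y))"
    using z by (intro continuous_intros) auto
  then show "set_borel_measurable \<mu> ?A (\<lambda>y. 1 / (z - y))"
    using cantorK_diff_gen_in_sets[OF Qsq_in_gen[OF x]] by (rule set_borel_measurable_continuous_on[rotated])
  fix y assume y: "y \<in> ?A"
  then obtain j where "j < n" "gap * side lam j \<le> cmod (z - y)"
    using separation_from_Qsq[OF x, of y n] z by blast
  moreover have "gap * side lam n \<le> gap * side lam j"
    using side_antimono[of j n] \<open>j < n\<close> gap_pos by (intro mult_left_mono) auto
  moreover have "0 < gap * side lam n" using gap_pos side_gt_0 by simp
  ultimately show "norm (1 / (z - y)) \<le> 1 / (gap * side lam n)"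
    by (simp add: norm_divide frac_le)
qed

lemma Tn_lipschitz:
  assumes x: "x \<in> cantorK lam" and z: "z \<in> Qsq lam n x" "z' \<in> Qsq lam n x"
  shows "cmod (Tn lam \<mu> n z - Tn lam \<mu> n z') \<le> cmod (z - z') * kernel_lip n"
proof -
  define A where "A = cantorK lam - Qsq lam n x"
  define h where "h y = cmod (z - z') * (\<Sum>j<n. indicator (Qsq lam j x) y / (gap * side lam j)^2)" for y
  have gen: "Qsq lam j x \<in> gen lam j" for j by (rule Qsq_in_gen[OF x])
  have int: "set_integrable \<mu> A (\<lambda>y. 1 / (z - y) - 1 / (z' - y))"
    using kernel_set_integrable[OF x z(1)] kernel_set_integrable[OF x z(2)]
    unfolding A_def by (rule set_integral_diff)
  have int_h: "integrable \<mu> h"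
    unfolding h_def using gen_in_sets[OF gen]
    by (intro integrable_mult_right integrable_sum integrable_divide integrable_real_indicator)
      (auto simp: less_top[symmetric])
  have "Tn lam \<mu> n z - Tn lam \<mu> n z' = (LINT y:A|\<mu>. 1 / (z - y) - 1 / (z' - y))"
    using kernel_set_integrable[OF x z(1)] kernel_set_integrable[OF x z(2)]
    by (simp add: Tn_eq[OF gen z(1)] Tn_eq[OF gen z(2)] A_def)
  also have "cmod \<dots> \<le> (LINT y:A|\<mu>. cmod (1 / (z - y) - 1 / (z' - y)))"
    using int by (rule set_integral_norm_bound)
  also have "\<dots> \<le> (\<integral>y. h y \<partial>\<mu>)"
    unfolding set_lebesgue_integral_def
  proof (rule integral_mono)
    show "integrable \<mu> (\<lambda>y. indicator A y *\<^sub>R cmod (1 / (z - y) - 1 / (z' - y)))"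
      using set_integrable_norm[OF int] unfolding set_integrable_def .
    fix y
    have "0 \<le> h y" unfolding h_def by (intro mult_nonneg_nonneg sum_nonneg) auto
    then show "indicator A y *\<^sub>R cmod (1 / (z - y) - 1 / (z' - y)) \<le> h y"
      using norm_inverse_diff_le[OF x z, of y] unfolding A_def h_def
      by (cases "y \<in> cantorK lam - Qsq lam n x") auto
  qed (rule int_h)
  also have "(\<integral>y. h y \<partial>\<mu>) = cmod (z - z') * (\<Sum>j<n. measure \<mu> (Qsq lam j x) / (gap * side lam j)^2)"
    unfolding h_def integral_mult_right_zero using gen_in_sets[OF gen]
    by (simp add: less_top[symmetric] sets_eq_imp_space_eq[OF sets_\<mu>])
  also have "\<dots> = cmod (z - z') * kernel_lip n"
    unfolding kernel_lip_def by (simp add: measure_gen[OF gen] power_one_over)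
  finally show ?thesis .
qed

lemma Sn_Tn_bound:
  assumes x: "x \<in> cantorK lam"
  shows "norm (Sn lam \<mu> n x - Tn lam \<mu> n x) \<le> approx_const lambda * a_seq lam n"
proof -
  define Q where "Q = Qsq lam n x"
  define B where "B = 2 * side lam n * kernel_lip n"
  have Q: "Q \<in> gen lam n" "x \<in> Q" unfolding Q_def using Qsq_in_gen mem_Qsq x by auto
  have osc: "norm (Tn lam \<mu> n z - Tn lam \<mu> n x) \<le> B" if "z \<in> Q" for z
  proof -
    have "norm (Tn lam \<mu> n z - Tn lam \<mu> n x) \<le> cmod (z - x) * kernel_lip n"
      using Tn_lipschitz[OF x] that Q unfolding Q_def by simp
    also have "\<dots> \<le> B"
      unfolding B_def using diameter_gen_le[OF Q(1) that Q(2)] kernel_lip_nonneg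
      by (intro mult_right_mono) auto
    finally show ?thesis .
  qed
  have "(kernel_lip n)-lipschitz_on Q (Tn lam \<mu> n)"
  proof (rule lipschitz_onI)
    fix z z' assume "z \<in> Q" "z' \<in> Q"
    then show "dist (Tn lam \<mu> n z) (Tn lam \<mu> n z') \<le> kernel_lip n * dist z z'"
      using Tn_lipschitz[OF x] unfolding Q_def dist_norm by (simp add: mult.commute)
  qed (rule kernel_lip_nonneg)
  then have "set_borel_measurable \<mu> Q (Tn lam \<mu> n)"
    by (intro set_borel_measurable_continuous_on gen_in_sets[OF Q(1)] lipschitz_on_continuous_on)
  moreover have "norm (Tn lam \<mu> n z) \<le> norm (Tn lam \<mu> n x) + B" if "z \<in> Q" for z
    using osc[OF that] norm_triangle_ineq2[of "Tn lam \<mu> n z" "Tn lam \<mu> n x"] by simp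
  ultimately have "set_integrable \<mu> Q (Tn lam \<mu> n)"
    by (rule set_integrable_bounded)
  then have "norm (Sn lam \<mu> n x - Tn lam \<mu> n x) \<le> B"
    unfolding Sn_def Q_def[symmetric]
    using gen_in_sets[OF Q(1)] measure_gen[OF Q(1)] osc
    by (intro norm_set_average_diff_le) auto
  then show ?thesis using diameter_kernel_lip_le[of n] unfolding B_def by (rule order_trans)
qed

end

theorem mainTheorem6:
  fixes lambda :: real
  assumes "1/4 \<le> lambda" and "lambda < 1/2"
  shows "\<exists>C>0. \<forall>(lam :: nat \<Rightarrow> real) (\<mu> :: complex measure).
           (\<forall>n\<ge>1. 1/4 \<le> lam n \<and> lam n \<le> lambda) \<longrightarrow>
           sets \<mu> = sets borel \<longrightarrow> prob_space \<mu> \<longrightarrow>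
           measure \<mu> (cantorK lam) = 1 \<longrightarrow>
           (\<forall>n. \<forall>Q\<in>gen lam n. measure \<mu> Q = 1 / 4 ^ n) \<longrightarrow>
           (\<forall>n. \<forall>x\<in>cantorK lam. norm (Sn lam \<mu> n x - Tn lam \<mu> n x) \<le> C * a_seq lam n)"
proof (intro exI[of _ "approx_const lambda"] conjI allI impI ballI)
  show "approx_const lambda > 0" using assms by (intro approx_const_pos) auto
next
  fix lam :: "nat \<Rightarrow> real" and \<mu> :: "complex measure" and n x
  assume lam: "\<forall>n\<ge>1. 1/4 \<le> lam n \<and> lam n \<le> lambda" and sets: "sets \<mu> = sets borel"
    and prob: "prob_space \<mu>" and gen: "\<forall>n. \<forall>Q\<in>gen lam n. measure \<mu> Q = 1 / 4 ^ n"
    and x: "x \<in> cantorK lam"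
  have "cantor_ratios lam lambda" using lam assms(2) by (rule cantor_ratios.intro)
  moreover have "cantor_measure_axioms lam \<mu>"
    using sets prob_space.axioms(1)[OF prob] gen by (intro cantor_measure_axioms.intro) auto
  ultimately interpret cantor_measure lam lambda \<mu> by (rule cantor_measure.intro)
  show "norm (Sn lam \<mu> n x - Tn lam \<mu> n x) \<le> approx_const lambda * a_seq lam n"
    using Sn_Tn_bound x .
qed

end
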